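(* Let $\nu>-1$ be real. Denote by $0<j_1^\nu<j_2^\nu<\cdots$ the positive zeros of $J_\nu(\cdot;q^2)$ and by $0<j_1^{\nu+1}<j_2^{\nu+1}<\cdots$ those of $J_{\nu+1}(\cdot;q^2)$. Then they interlace: $$0<j_1^\nu<j_1^{\nu+1}<j_2^\nu<j_2^{\nu+1}<j_3^\nu<j_3^{\nu+1}<\cdots.$$
   Context: Fix $0<q<1$. For $a\in\mathbb C$ put $(a;q)_0=1$, $(a;q)_k=\prod_{i=0}^{k-1}(1-aq^i)$, $(a;q)_\infty=\prod_{i\ge0}(1-aq^i)$. For $\nu\in\mathbb C$ and $x\in\mathbb C\setminus\{0\}$ the Hahn–Exton $q$-Bessel function is $$J_\nu(x;q^2)=\frac{x^\nu}{(q^2;q^2)_\infty}\sum_{k=0}^\infty\frac{(-1)^kq^{k(k+1)}(q^{2\nu+2k+2};q^2)_\infty}{(q^2;q^2)_k}\,x^{2k},$$ with $x^\nu=\exp(\nu\operatorname{Log}x)$ (principal branch). For $\nu>-1$ the positive zeros of $J_\nu(\cdot;q^2)$ form an infinite increasing sequence. *)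

theory Defs
  imports "HOL-Analysis.Analysis"
begin

definition qpoch :: "complex \<Rightarrow> real \<Rightarrow> nat \<Rightarrow> complex" where
  "qpoch a q k = (\<Prod>i<k. 1 - a * of_real (q ^ i))"

definition qpoch_inf :: "complex \<Rightarrow> real \<Rightarrow> complex" where
  "qpoch_inf a q = lim (\<lambda>n. qpoch a q n)"

text \<open>Hahn--Exton q-Bessel function J_nu(x;q^2), principal branch x^nu = exp(nu Ln x).\<close>
definition hahn_exton_J :: "real \<Rightarrow> complex \<Rightarrow> complex \<Rightarrow> complex" where
  "hahn_exton_J q \<nu> x =
     exp (\<nu> * Ln x) / qpoch_inf (of_real (q^2)) (q^2) *
     (\<Sum>k. (-1) ^ k * of_real (q ^ (k * (k + 1))) *
            qpoch_inf (of_real q powr (2 * \<nu> + 2 * of_nat k + 2)) (q^2)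
            / qpoch (of_real (q^2)) (q^2) k * x ^ (2 * k))"

definition pos_zeros :: "real \<Rightarrow> real \<Rightarrow> real set" where
  "pos_zeros q \<nu> = {x. 0 < x \<and> hahn_exton_J q (of_real \<nu>) (of_real x) = 0}"

end

theory Submission
  imports Defs
begin

text \<open>
  Write c = q^(2 nu + 2). Then J_nu(x;q^2) = x^nu / (q^2;q^2)_inf * F(x^2) and
  J_(nu+1)(x;q^2) = x^(nu+1) / (q^2;q^2)_inf * G(x^2) for the entire power series F = phi_c and
  G = phi_(c q^2), where phi_c(z) = sum_k (-1)^k q^(k(k+1)) (c q^(2k);q^2)_inf / (q^2;q^2)_k z^k.
  Two contiguous relations, F(z) = G(z) - c G(q^2 z) and F(z) - F(q^2 z) = - q^2 z G(q^2 z),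
  and their derivatives show that the Wronskian W = K' F - K F' of F and K(z) = z G(z) satisfies
  W(z) = F(z)^2 + c W(q^2 z). Iterating, W(z) >= c^n W(q^(2n) z), which is positive for large n
  because W(0) = F(0) G(0) > 0. A positive Wronskian makes K/F strictly increasing between
  consecutive zeros of F and forces K to change sign there, so the positive zeros of F and K
  interlace; F has arbitrarily large zeros by the three-term relation obtained from the two
  contiguous relations. Taking square roots transfers the interlacing to J_nu and J_(nu+1).
\<close>

lemma IVT_sign_change:
  fixes f :: "real \<Rightarrow> real"
  assumes "a \<le> b" "f a * f b \<le> 0" "\<And>t. isCont f t"
  shows "\<exists>t. a \<le> t \<and> t \<le> b \<and> f t = 0"
proof -
  have "(f a \<le> 0 \<and> 0 \<le> f b) \<or> (f b \<le> 0 \<and> 0 \<le> f a)"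
    using assms(2) by (auto simp: mult_le_0_iff)
  then show ?thesis using IVT[of f a 0 b] IVT2[of f b 0 a] assms by blast
qed

lemma least_element_locally_finite:
  fixes S U :: "real set"
  assumes "\<And>M. finite (S \<inter> {..M})" and "U \<subseteq> S" and "U \<noteq> {}"
  shows "\<exists>m. m \<in> U \<and> (\<forall>z\<in>U. m \<le> z)"
proof -
  obtain u where u: "u \<in> U" using assms(3) by auto
  have fin: "finite (U \<inter> {..u})"
    by (rule finite_subset[OF _ assms(1)[of u]]) (use assms(2) in auto)
  have "Min (U \<inter> {..u}) \<in> U" using Min_in[OF fin] u by auto
  moreover have "Min (U \<inter> {..u}) \<le> z" if "z \<in> U" for z
    using Min_le[OF fin, of z] Min_le[OF fin, of u] u that by (cases "z \<le> u") auto
  ultimately show ?thesis by blast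
qed

lemma strict_mono_enumeration_locally_finite:
  fixes S :: "real set"
  assumes fin: "\<And>M. finite (S \<inter> {..M})" and unbounded: "\<And>M. \<exists>z\<in>S. M < z"
  shows "\<exists>a :: nat \<Rightarrow> real. strict_mono a \<and> range a = S"
proof -
  define least where "least U = (SOME m. m \<in> U \<and> (\<forall>z\<in>U. m \<le> z))" for U :: "real set"
  have least: "least U \<in> U" "\<And>z. z \<in> U \<Longrightarrow> least U \<le> z" if "U \<subseteq> S" "U \<noteq> {}" for U
    using someI_ex[OF least_element_locally_finite[OF fin that]] unfolding least_def by auto
  have above_ne: "{z\<in>S. t < z} \<noteq> {}" for t
    using unbounded[of t] by auto
  define a where "a = rec_nat (least S) (\<lambda>_ t. least {z\<in>S. t < z})"
  have a_0: "a 0 = least S" and a_Suc: "a (Suc n) = least {z\<in>S. a n < z}" for n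
    by (simp_all add: a_def)
  have a_in: "a n \<in> S" for n
    using least(1)[of S] least(1)[OF _ above_ne] above_ne[of 0] by (cases n) (auto simp: a_0 a_Suc)
  have a_less: "a n < a (Suc n)" for n
    using least(1)[OF _ above_ne, of "a n"] by (auto simp: a_Suc)
  have mono: "strict_mono a"
    using a_less by (rule strict_mono_Suc_iff[THEN iffD2, rule_format])
  have "s \<in> range a" if s: "s \<in> S" for s
  proof (rule ccontr)
    assume s_notin: "s \<notin> range a"
    have "a n < s" for n
    proof (induction n)
      case 0
      have "a 0 \<le> s" using least(2)[of S s] s by (auto simp: a_0)
      then show ?case using s_notin by (metis order_le_less rangeI)
    next
      case (Suc n)
      then have "a (Suc n) \<le> s" using least(2)[OF _ above_ne, of "a n" s] s by (auto simp: a_Suc)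
      then show ?case using s_notin by (metis order_le_less rangeI)
    qed
    then have "range a \<subseteq> S \<inter> {..s}" using a_in by (auto intro: less_imp_le)
    then have "finite (range a)" using fin[of s] by (rule finite_subset)
    then show False using strict_mono_imp_inj_on[OF mono] finite_imageD by (metis infinite_UNIV_nat)
  qed
  then have "range a = S" using a_in by auto
  with mono show ?thesis by blast
qed

lemma interlaced_enumeration:
  fixes a :: "nat \<Rightarrow> real" and Z :: "real set"
  assumes mono: "strict_mono a" and unbounded: "\<And>z. \<exists>n. z < a n"
    and gap: "\<And>n. \<exists>!z. z \<in> Z \<and> a n < z \<and> z < a (Suc n)"
    and above: "\<And>z. z \<in> Z \<Longrightarrow> a 0 < z" and disjoint: "Z \<inter> range a = {}"
  shows "\<exists>b. strict_mono b \<and> range b = Z \<and> (\<forall>n. a n < b n \<and> b n < a (Suc n))"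
proof -
  define b where "b n = (THE z. z \<in> Z \<and> a n < z \<and> z < a (Suc n))" for n
  have b: "b n \<in> Z" "a n < b n" "b n < a (Suc n)" for n
    using theI'[OF gap[of n]] unfolding b_def by auto
  have "strict_mono b"
    by (rule strict_mono_Suc_iff[THEN iffD2]) (meson b order.strict_trans)
  moreover have "z \<in> range b" if z: "z \<in> Z" for z
  proof -
    define m where "m = (LEAST m. z < a m)"
    have z_less: "z < a m" unfolding m_def using unbounded by (rule LeastI_ex)
    have "m \<noteq> 0" using above[OF z] z_less by (metis less_asym m_def)
    then obtain n where n: "m = Suc n" using not0_implies_Suc by blast
    have "\<not> z < a n" using not_less_Least[of n "\<lambda>m. z < a m"] n m_def by auto
    moreover have "z \<noteq> a n" using disjoint z by auto
    ultimately have "a n < z" by auto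
    then have "z = b n" using gap[of n] b[of n] z z_less n by blast
    then show ?thesis by simp
  qed
  ultimately show ?thesis using b by blast
qed

section \<open>Interlacing from a positive Wronskian\<close>

locale positive_wronskian =
  fixes F K F' K' :: "real \<Rightarrow> real"
  assumes F_deriv: "\<And>x. (F has_real_derivative F' x) (at x)"
    and K_deriv: "\<And>x. (K has_real_derivative K' x) (at x)"
    and wronskian_pos: "\<And>x. K' x * F x - K x * F' x > 0"
begin

lemma isCont_F: "isCont F x"
  using F_deriv by (rule DERIV_isCont)

lemma isCont_K: "isCont K x"
  using K_deriv by (rule DERIV_isCont)

lemma K_nonzero_at_zero_of_F: "F p = 0 \<Longrightarrow> K p \<noteq> 0"
  using wronskian_pos[of p] by auto

lemma sign_near_zero_of_F:
  assumes "F p = 0"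
  shows "\<exists>d>0. \<forall>h. 0 < h \<and> h < d \<longrightarrow> K p * F (p + h) < 0 \<and> K p * F (p - h) > 0"
proof -
  have deriv: "((\<lambda>x. K p * F x) has_real_derivative K p * F' p) (at p)"
    by (intro DERIV_cmult F_deriv)
  have neg: "K p * F' p < 0" using wronskian_pos[of p] assms by simp
  obtain d1 where "d1 > 0" "\<forall>h>0. h < d1 \<longrightarrow> K p * F (p + h) < 0"
    using DERIV_neg_dec_right[OF deriv neg] assms by auto
  moreover obtain d2 where "d2 > 0" "\<forall>h>0. h < d2 \<longrightarrow> K p * F (p - h) > 0"
    using DERIV_neg_dec_left[OF deriv neg] assms by auto
  ultimately show ?thesis by (intro exI[of _ "min d1 d2"]) auto
qed

lemma zero_of_F_not_islimpt:
  assumes "F p = 0"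
  shows "\<not> p islimpt {x. F x = 0}"
proof
  assume "p islimpt {x. F x = 0}"
  moreover obtain d where "d > 0"
    and d: "\<And>h. 0 < h \<Longrightarrow> h < d \<Longrightarrow> K p * F (p + h) < 0 \<and> K p * F (p - h) > 0"
    using sign_near_zero_of_F[OF assms] by blast
  ultimately obtain x where "F x = 0" "x \<noteq> p" "dist x p < d"
    unfolding islimpt_approachable by blast
  then show False using d[of "x - p"] d[of "p - x"] by (cases "p < x") (auto simp: dist_real_def)
qed

lemma finite_zeros_of_F_atMost: "finite ({x. 0 < x \<and> F x = 0} \<inter> {..M})"
proof -
  have closed: "closed {x. F x = 0}"
    using continuous_closed_vimage[of "{0}" F] isCont_F by (auto simp: vimage_def)
  have "finite ({0..M} \<inter> {x. F x = 0})"
  proof (rule finite_not_islimpt_in_compact)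
    show "\<not> z islimpt {x. F x = 0}" for z
      using zero_of_F_not_islimpt closed closed_limpt by blast
  qed simp
  then show ?thesis by (rule finite_subset[rotated]) auto
qed

lemma ratio_strict_mono:
  assumes "x < y" and nonzero: "\<And>t. x \<le> t \<Longrightarrow> t \<le> y \<Longrightarrow> F t \<noteq> 0"
  shows "K x / F x < K y / F y"
proof (rule DERIV_pos_imp_increasing[OF assms(1)])
  fix t assume t: "x \<le> t" "t \<le> y"
  have "((\<lambda>t. K t / F t) has_real_derivative (K' t * F t - K t * F' t) / (F t * F t)) (at t)"
    using DERIV_divide[OF K_deriv F_deriv nonzero[OF t]] by (simp add: power2_eq_square)
  moreover have "0 < F t * F t"
    using nonzero[OF t] by (cases "F t > 0") (auto simp: mult_neg_neg)
  then have "(K' t * F t - K t * F' t) / (F t * F t) > 0"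
    using wronskian_pos[of t] by (intro divide_pos_pos) auto
  ultimately show "\<exists>l. ((\<lambda>t. K t / F t) has_real_derivative l) (at t) \<and> 0 < l" by blast
qed

lemma K_sign_change_between_zeros_of_F:
  assumes "l < r" "F l = 0" "F r = 0" and nonzero: "\<And>t. l < t \<Longrightarrow> t < r \<Longrightarrow> F t \<noteq> 0"
  shows "K l * K r < 0"
proof -
  obtain d1 where "d1 > 0" and d1: "\<And>h. 0 < h \<Longrightarrow> h < d1 \<Longrightarrow> K l * F (l + h) < 0"
    using sign_near_zero_of_F[OF assms(2)] by blast
  obtain d2 where "d2 > 0" and d2: "\<And>h. 0 < h \<Longrightarrow> h < d2 \<Longrightarrow> K r * F (r - h) > 0"
    using sign_near_zero_of_F[OF assms(3)] by blast
  define h where "h = min (min d1 d2) ((r - l) / 2) / 2"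
  have h: "0 < h" "h < d1" "h < d2" "l + h < r - h"
    using \<open>d1 > 0\<close> \<open>d2 > 0\<close> \<open>l < r\<close> unfolding h_def min_def by (auto simp: field_simps)
  have "F (l + h) * F (r - h) > 0"
  proof (rule ccontr)
    assume "\<not> ?thesis"
    then obtain t where "l + h \<le> t" "t \<le> r - h" "F t = 0"
      using IVT_sign_change[of "l + h" "r - h" F] isCont_F h(4) by (meson less_imp_le not_less)
    then show False using nonzero[of t] h(1) by linarith
  qed
  moreover have "(K l * K r) * (F (l + h) * F (r - h)) < 0"
    using mult_neg_pos[OF d1[OF h(1,2)] d2[OF h(1,3)]] by (simp add: mult_ac)
  ultimately show ?thesis
    using mult_nonneg_nonneg[of "K l * K r" "F (l + h) * F (r - h)"] by linarith
qed

lemma unique_zero_of_K_between_zeros_of_F: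
  assumes "l < r" "F l = 0" "F r = 0" and nonzero: "\<And>t. l < t \<Longrightarrow> t < r \<Longrightarrow> F t \<noteq> 0"
  shows "\<exists>!z. l < z \<and> z < r \<and> K z = 0"
proof -
  have "K l * K r < 0" by (rule K_sign_change_between_zeros_of_F[OF assms])
  then obtain z where z: "l \<le> z" "z \<le> r" "K z = 0"
    using IVT_sign_change[of l r K] isCont_K \<open>l < r\<close> by (meson less_imp_le)
  moreover have "z \<noteq> l" "z \<noteq> r" using z(3) K_nonzero_at_zero_of_F assms(2,3) by auto
  moreover have ratio_less: "K u / F u < K v / F v" if "l < u" "u < v" "v < r" for u v
    using that by (intro ratio_strict_mono nonzero) auto
  then have "y = z" if "l < y" "y < r" "K y = 0" "l < z" "z < r" "K z = 0" for y z
    using that ratio_less[of y z] ratio_less[of z y] by (cases y z rule: linorder_cases) auto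
  ultimately show ?thesis by (intro ex1I[of _ z]) (auto simp: order_le_less)
qed

lemma K_nonzero_before_zeros_of_F:
  assumes "K 0 = 0" "0 < z" and nonzero: "\<And>t. 0 \<le> t \<Longrightarrow> t \<le> z \<Longrightarrow> F t \<noteq> 0"
  shows "K z \<noteq> 0"
  using ratio_strict_mono[OF assms(2) nonzero] assms(1) by auto

theorem interlacing_positive_zeros:
  assumes F_0: "F 0 \<noteq> 0" and K_0: "K 0 = 0" and unbounded: "\<And>M. \<exists>z>M. F z = 0"
  shows "\<exists>a b :: nat \<Rightarrow> real. strict_mono a \<and> range a = {z. 0 < z \<and> F z = 0} \<and>
           strict_mono b \<and> range b = {z. 0 < z \<and> K z = 0} \<and>
           0 < a 0 \<and> (\<forall>n. a n < b n \<and> b n < a (Suc n))"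
proof -
  have "\<exists>z\<in>{z. 0 < z \<and> F z = 0}. M < z" for M
    using unbounded[of "max M 0"] by auto
  then obtain a :: "nat \<Rightarrow> real"
    where mono: "strict_mono a" and range_a: "range a = {z. 0 < z \<and> F z = 0}"
    using strict_mono_enumeration_locally_finite[OF finite_zeros_of_F_atMost] by blast
  have a_pos: "0 < a n" and F_a: "F (a n) = 0" for n
    using range_a by auto
  have zero_of_F: "\<exists>m. t = a m" if "0 < t" "F t = 0" for t
    using that range_a by (metis (mono_tags, lifting) imageE mem_Collect_eq)
  have F_nonzero_gap: "F t \<noteq> 0" if "a n < t" "t < a (Suc n)" for n t
    using zero_of_F[of t] a_pos[of n] that by (auto simp: strict_mono_less[OF mono])
  have F_nonzero_before: "F t \<noteq> 0" if "0 \<le> t" "t < a 0" for t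
    using zero_of_F[of t] F_0 that by (cases "t = 0") (auto simp: strict_mono_less[OF mono])
  have "\<exists>b. strict_mono b \<and> range b = {z. 0 < z \<and> K z = 0} \<and> (\<forall>n. a n < b n \<and> b n < a (Suc n))"
  proof (rule interlaced_enumeration[OF mono])
    show "\<exists>n. z < a n" for z
    proof -
      obtain w where "w > max z 0" "F w = 0" using unbounded by blast
      then show ?thesis using zero_of_F[of w] by auto
    qed
    show "\<exists>!z. z \<in> {z. 0 < z \<and> K z = 0} \<and> a n < z \<and> z < a (Suc n)" for n
    proof -
      have "a n < a (Suc n)" using mono by (simp add: strict_mono_less)
      then have "\<exists>!z. a n < z \<and> z < a (Suc n) \<and> K z = 0"
        by (rule unique_zero_of_K_between_zeros_of_F[OF _ F_a[of n] F_a[of "Suc n"] F_nonzero_gap[of n]])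
      moreover have "z \<in> {z. 0 < z \<and> K z = 0} \<and> a n < z \<and> z < a (Suc n) \<longleftrightarrow>
          a n < z \<and> z < a (Suc n) \<and> K z = 0" for z
        using a_pos[of n] by auto
      ultimately show ?thesis by simp
    qed
    show "a 0 < z" if z: "z \<in> {z. 0 < z \<and> K z = 0}" for z
    proof (rule ccontr)
      assume "\<not> a 0 < z"
      moreover have "z \<noteq> a 0" using z K_nonzero_at_zero_of_F[OF F_a[of 0]] by auto
      ultimately show False
        using K_nonzero_before_zeros_of_F[OF K_0, of z] F_nonzero_before z by auto
    qed
    show "{z. 0 < z \<and> K z = 0} \<inter> range a = {}"
      using K_nonzero_at_zero_of_F F_a by auto
  qed
  then show ?thesis using mono range_a a_pos by blast
qed

end

definition qpoch_real :: "real \<Rightarrow> real \<Rightarrow> nat \<Rightarrow> real" where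
  "qpoch_real x Q n = (\<Prod>i<n. 1 - x * Q ^ i)"

definition qpoch_inf_real :: "real \<Rightarrow> real \<Rightarrow> real" where
  "qpoch_inf_real x Q = (\<Prod>i. 1 - x * Q ^ i)"

lemma qpoch_of_real: "qpoch (of_real x) Q n = of_real (qpoch_real x Q n)"
  by (simp add: qpoch_def qpoch_real_def)

lemma mult_power_less_one:
  fixes x Q :: real
  assumes "0 \<le> Q" "Q \<le> 1" "x < 1"
  shows "x * Q ^ n < 1"
proof (cases "x \<le> 0")
  case True
  then have "x * Q ^ n \<le> 0" using assms by (simp add: mult_nonpos_nonneg)
  then show ?thesis by simp
next
  case False
  then have "x * Q ^ n \<le> x" using assms by (simp add: mult_left_le power_le_one)
  then show ?thesis using assms by linarith
qed

lemma convergent_prod_qpoch: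
  fixes x Q :: real
  assumes "0 \<le> Q" "Q < 1" "x < 1"
  shows "convergent_prod (\<lambda>i. 1 - x * Q ^ i)"
proof -
  have "summable (\<lambda>i. \<bar>- x * Q ^ i\<bar>)"
    using assms by (simp add: abs_mult power_abs summable_geometric summable_mult)
  moreover have "- x * Q ^ i \<noteq> -1" for i
    using mult_power_less_one[OF _ _ assms(3), of Q i] assms by auto
  ultimately show ?thesis using summable_imp_convergent_prod_real by fastforce
qed

lemma qpoch_inf_real_pos:
  assumes "0 \<le> Q" "Q < 1" "x < 1"
  shows "0 < qpoch_inf_real x Q"
proof (rule has_prod_pos)
  show "(\<lambda>i. 1 - x * Q ^ i) has_prod qpoch_inf_real x Q"
    unfolding qpoch_inf_real_def by (rule convergent_prod_has_prod[OF convergent_prod_qpoch[OF assms]])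
  show "0 < 1 - x * Q ^ i" for i
    using mult_power_less_one[of Q x i] assms by simp
qed

lemma qpoch_inf_real_le_one:
  assumes "0 \<le> Q" "Q < 1" "0 \<le> x" "x < 1"
  shows "qpoch_inf_real x Q \<le> 1"
  unfolding qpoch_inf_real_def
proof (rule prodinf_le_const[OF convergent_prod_qpoch])
  show "prod (\<lambda>i. 1 - x * Q ^ i) {..<n} \<le> 1" for n
    using assms mult_power_less_one[of Q x] by (intro prod_le_1) (auto simp: less_imp_le)
qed (use assms in auto)

lemma qpoch_inf_real_rec:
  assumes "0 \<le> Q" "Q < 1" "x < 1"
  shows "qpoch_inf_real x Q = (1 - x) * qpoch_inf_real (x * Q) Q"
proof -
  have "qpoch_inf_real (x * Q) Q = (\<Prod>i. 1 - x * Q ^ Suc i)"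
    unfolding qpoch_inf_real_def by (simp add: mult_ac)
  also have "\<dots> = qpoch_inf_real x Q / (1 - x)"
    unfolding qpoch_inf_real_def using assms
    by (subst prodinf_split_head[OF convergent_prod_qpoch]) auto
  finally show ?thesis using assms by simp
qed

lemma qpoch_inf_of_real:
  assumes "0 \<le> Q" "Q < 1" "x < 1"
  shows "qpoch_inf (of_real x) Q = of_real (qpoch_inf_real x Q)"
proof -
  have "(\<lambda>n. qpoch_real x Q (Suc n)) \<longlonglongrightarrow> qpoch_inf_real x Q"
    unfolding qpoch_real_def qpoch_inf_real_def lessThan_Suc_atMost
    by (rule convergent_prod_LIMSEQ[OF convergent_prod_qpoch[OF assms]])
  then have "(\<lambda>n. qpoch (of_real x) Q n) \<longlonglongrightarrow> of_real (qpoch_inf_real x Q)"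
    unfolding qpoch_of_real by (intro tendsto_of_real) (rule LIMSEQ_imp_Suc)
  then show ?thesis unfolding qpoch_inf_def by (rule limI)
qed

lemma qpoch_real_ge_power:
  assumes "0 \<le> Q" "Q \<le> 1"
  shows "(1 - Q) ^ n \<le> qpoch_real Q Q n"
proof -
  have "(\<Prod>i<n. 1 - Q) \<le> qpoch_real Q Q n"
    unfolding qpoch_real_def using assms
    by (intro prod_mono) (auto simp: mult_left_le power_le_one)
  then show ?thesis by simp
qed

lemma summable_power_triangular:
  fixes q r :: real
  assumes "0 \<le> q" "q < 1"
  shows "summable (\<lambda>k. q ^ (k * (k + 1)) * r ^ k)"
proof -
  have "(\<lambda>k. q ^ Suc k * \<bar>r\<bar>) \<longlonglongrightarrow> 0"
    using assms by (intro tendsto_mult_left_zero LIMSEQ_power_zero LIMSEQ_Suc) auto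
  then have "\<forall>\<^sub>F k in sequentially. q ^ Suc k * \<bar>r\<bar> < 1 / 2"
    by (rule order_tendstoD) simp
  then obtain N where N: "\<And>k. k \<ge> N \<Longrightarrow> q ^ Suc k * \<bar>r\<bar> < 1 / 2"
    unfolding eventually_sequentially by blast
  have "norm (q ^ (k * (k + 1)) * r ^ k) \<le> (1 / 2) ^ k" if "k \<ge> N" for k
  proof -
    have "q ^ (k * (k + 1)) = (q ^ Suc k) ^ k"
      by (metis Suc_eq_plus1 mult.commute power_mult)
    then have "norm (q ^ (k * (k + 1)) * r ^ k) = (q ^ Suc k * \<bar>r\<bar>) ^ k"
      using assms by (simp add: abs_mult power_abs power_mult_distrib)
    also have "\<dots> \<le> (1 / 2) ^ k"
      using N[OF that] assms by (intro power_mono) simp_all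
    finally show ?thesis .
  qed
  then show ?thesis by (intro summable_comparison_test'[OF summable_geometric]) auto
qed

section \<open>The entire part of the Hahn-Exton q-Bessel function\<close>

locale hahn_exton_q =
  fixes q :: real
  assumes q_pos: "0 < q" and q_less_one: "q < 1"
begin

definition bessel_coeff :: "real \<Rightarrow> nat \<Rightarrow> real" where
  "bessel_coeff c k =
     (-1) ^ k * q ^ (k * (k + 1)) * qpoch_inf_real (c * (q^2) ^ k) (q^2) / qpoch_real (q^2) (q^2) k"

definition bessel_series :: "real \<Rightarrow> real \<Rightarrow> real" where
  "bessel_series c z = (\<Sum>k. bessel_coeff c k * z ^ k)"

definition bessel_series_deriv :: "real \<Rightarrow> real \<Rightarrow> real" where
  "bessel_series_deriv c z = (\<Sum>k. diffs (bessel_coeff c) k * z ^ k)"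

lemma q2_pos: "0 < q^2" and q2_less_one: "q^2 < 1"
  using q_pos q_less_one by (auto simp: power_less_one_iff)

lemma mult_q2_bounds:
  assumes "0 \<le> c" "c < 1"
  shows "0 \<le> c * q^2" "c * q^2 < 1"
  using assms q2_pos mult_power_less_one[of "q^2" c 1] q2_less_one by simp_all

lemma qpoch_real_q2_pos: "0 < qpoch_real (q^2) (q^2) k"
  using q2_pos q2_less_one by (intro less_le_trans[OF _ qpoch_real_ge_power]) auto

lemma bessel_coeff_bound:
  assumes "0 \<le> c" "c < 1"
  shows "\<bar>bessel_coeff c k\<bar> \<le> q ^ (k * (k + 1)) * (1 / (1 - q^2)) ^ k"
proof -
  have c_Qk: "0 \<le> c * (q^2) ^ k" "c * (q^2) ^ k < 1"
    using assms q2_pos q2_less_one mult_power_less_one[of "q^2" c k] by auto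
  have P: "0 < qpoch_inf_real (c * (q^2) ^ k) (q^2)" "qpoch_inf_real (c * (q^2) ^ k) (q^2) \<le> 1"
    using qpoch_inf_real_pos[OF _ _ c_Qk(2)] qpoch_inf_real_le_one[OF _ _ c_Qk] q2_pos q2_less_one by auto
  have "\<bar>bessel_coeff c k\<bar> = q ^ (k * (k + 1)) * qpoch_inf_real (c * (q^2) ^ k) (q^2) / qpoch_real (q^2) (q^2) k"
    unfolding bessel_coeff_def using P qpoch_real_q2_pos[of k] q_pos by (simp add: abs_mult power_abs)
  also have "\<dots> \<le> q ^ (k * (k + 1)) / (1 - q^2) ^ k"
    using P q_pos q2_less_one qpoch_real_ge_power[of "q^2" k] q2_pos
    by (intro frac_le mult_left_le) auto
  finally show ?thesis by (simp add: power_divide)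
qed

lemma summable_bessel_coeff:
  assumes "0 \<le> c" "c < 1"
  shows "summable (\<lambda>k. bessel_coeff c k * z ^ k)"
proof (rule summable_comparison_test')
  show "summable (\<lambda>k. q ^ (k * (k + 1)) * (\<bar>z\<bar> / (1 - q^2)) ^ k)"
    using q_pos q_less_one by (intro summable_power_triangular) auto
  show "norm (bessel_coeff c k * z ^ k) \<le> q ^ (k * (k + 1)) * (\<bar>z\<bar> / (1 - q^2)) ^ k" for k
    using mult_right_mono[OF bessel_coeff_bound[OF assms, of k], of "\<bar>z\<bar> ^ k"]
    by (simp add: abs_mult power_abs power_divide)
qed

lemma bessel_series_has_deriv:
  assumes "0 \<le> c" "c < 1"
  shows "(bessel_series c has_real_derivative bessel_series_deriv c z) (at z)"
  unfolding bessel_series_def[abs_def] bessel_series_deriv_def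
  by (rule termdiffs_strong_converges_everywhere) (rule summable_bessel_coeff[OF assms])

lemma bessel_series_dilated_has_deriv:
  assumes "0 \<le> c" "c < 1"
  shows "((\<lambda>z. bessel_series c (a * z)) has_real_derivative a * bessel_series_deriv c (a * z)) (at z)"
  using DERIV_chain2[OF bessel_series_has_deriv[OF assms] DERIV_cmult[OF DERIV_ident], of a z]
  by (simp add: mult.commute[of _ a])

lemma isCont_bessel_series:
  "0 \<le> c \<Longrightarrow> c < 1 \<Longrightarrow> isCont (bessel_series c) z"
  using bessel_series_has_deriv by (rule DERIV_isCont)

lemma isCont_bessel_series_deriv:
  "0 \<le> c \<Longrightarrow> c < 1 \<Longrightarrow> isCont (bessel_series_deriv c) z"
  unfolding bessel_series_deriv_def[abs_def]
  by (intro isCont_powser_converges_everywhere termdiff_converges_all summable_bessel_coeff)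

lemma bessel_series_at_0: "bessel_series c 0 = qpoch_inf_real c (q^2)"
  unfolding bessel_series_def powser_zero by (simp add: bessel_coeff_def qpoch_real_def)

lemma bessel_series_at_0_pos: "c < 1 \<Longrightarrow> 0 < bessel_series c 0"
  unfolding bessel_series_at_0 using q2_pos q2_less_one by (intro qpoch_inf_real_pos) auto

lemma bessel_coeff_contiguous:
  assumes "c < 1"
  shows "bessel_coeff c k = (1 - c * (q^2) ^ k) * bessel_coeff (c * q^2) k"
proof -
  have "c * (q^2) ^ k < 1"
    using assms q2_pos q2_less_one mult_power_less_one[of "q^2" c k] by auto
  then have "qpoch_inf_real (c * (q^2) ^ k) (q^2) =
      (1 - c * (q^2) ^ k) * qpoch_inf_real (c * q^2 * (q^2) ^ k) (q^2)"
    using qpoch_inf_real_rec q2_pos q2_less_one by (simp add: mult_ac)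
  then show ?thesis unfolding bessel_coeff_def by simp
qed

lemma bessel_coeff_Suc:
  "(1 - (q^2) ^ Suc k) * bessel_coeff c (Suc k) = - ((q^2) ^ Suc k * bessel_coeff (c * q^2) k)"
proof -
  have "(q^2) ^ Suc k < 1" using q2_pos q2_less_one by (intro power_Suc_less_one) auto
  have qpoch_Suc: "qpoch_real (q^2) (q^2) (Suc k) = qpoch_real (q^2) (q^2) k * (1 - (q^2) ^ Suc k)"
    by (simp add: qpoch_real_def)
  have "Suc k * (Suc k + 1) = k * (k + 1) + 2 * Suc k" by simp
  then have power_Suc: "q ^ (Suc k * (Suc k + 1)) = q ^ (k * (k + 1)) * (q^2) ^ Suc k"
    by (simp only: power_add power_mult)
  have "c * (q^2) ^ Suc k = c * q^2 * (q^2) ^ k" by simp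
  then show ?thesis
    using \<open>(q^2) ^ Suc k < 1\<close> qpoch_real_q2_pos[of k]
    unfolding bessel_coeff_def qpoch_Suc power_Suc by (simp add: field_simps)
qed

lemma bessel_series_contiguous:
  assumes "0 \<le> c" "c < 1"
  shows "bessel_series c z = bessel_series (c * q^2) z - c * bessel_series (c * q^2) (q^2 * z)"
proof -
  note cq = mult_q2_bounds[OF assms]
  have "(\<lambda>k. bessel_coeff (c * q^2) k * z ^ k - c * (bessel_coeff (c * q^2) k * (q^2 * z) ^ k))
      sums (bessel_series (c * q^2) z - c * bessel_series (c * q^2) (q^2 * z))"
    unfolding bessel_series_def by (intro sums_diff sums_mult summable_sums summable_bessel_coeff cq)
  moreover have "(\<lambda>k. bessel_coeff (c * q^2) k * z ^ k - c * (bessel_coeff (c * q^2) k * (q^2 * z) ^ k))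
      = (\<lambda>k. bessel_coeff c k * z ^ k)"
    by (simp add: bessel_coeff_contiguous assms power_mult_distrib algebra_simps)
  ultimately show ?thesis unfolding bessel_series_def by (simp add: sums_iff)
qed

lemma bessel_series_q_difference:
  assumes "0 \<le> c" "c < 1"
  shows "bessel_series c z - bessel_series c (q^2 * z) = - (q^2 * z) * bessel_series (c * q^2) (q^2 * z)"
proof -
  note cq = mult_q2_bounds[OF assms]
  define f where "f k = bessel_coeff c k * z ^ k - bessel_coeff c k * (q^2 * z) ^ k" for k
  have f_Suc: "f (Suc k) = - (q^2 * z) * (bessel_coeff (c * q^2) k * (q^2 * z) ^ k)" for k
  proof -
    have "f (Suc k) = (1 - (q^2) ^ Suc k) * bessel_coeff c (Suc k) * z ^ Suc k"
      unfolding f_def by (simp add: power_mult_distrib algebra_simps)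
    then show ?thesis unfolding bessel_coeff_Suc by (simp add: power_mult_distrib algebra_simps)
  qed
  have "(\<lambda>k. f (Suc k)) sums (- (q^2 * z) * bessel_series (c * q^2) (q^2 * z))"
    unfolding f_Suc bessel_series_def by (intro sums_mult summable_sums summable_bessel_coeff cq)
  moreover have "f 0 = 0" by (simp add: f_def)
  ultimately have "f sums (- (q^2 * z) * bessel_series (c * q^2) (q^2 * z))"
    by (simp only: sums_Suc_iff add_0_right)
  moreover have "f sums (bessel_series c z - bessel_series c (q^2 * z))"
    unfolding f_def bessel_series_def by (intro sums_diff summable_sums summable_bessel_coeff assms)
  ultimately show ?thesis using sums_unique2 by blast
qed

lemma bessel_series_three_term:
  assumes "0 \<le> c" "c < 1"
  shows "q^2 * bessel_series c z + c * bessel_series c (q^2 * (q^2 * z)) =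
    (q^2 + c - q^2 * q^2 * z) * bessel_series c (q^2 * z)"
  using bessel_series_contiguous[OF assms, of "q^2 * z"] bessel_series_q_difference[OF assms, of z]
    bessel_series_q_difference[OF assms, of "q^2 * z"]
  by algebra

lemma bessel_series_unbounded_zeros:
  assumes "0 \<le> c" "c < 1"
  shows "\<exists>z>M. bessel_series c z = 0"
proof -
  define F where "F = bessel_series c"
  define Q where "Q = q^2"
  have Q: "0 < Q" "Q < 1" using q2_pos q2_less_one by (auto simp: Q_def)
  have three: "Q * F z + c * F (Q * (Q * z)) = (Q + c - Q * Q * z) * F (Q * z)" for z
    unfolding F_def Q_def by (rule bessel_series_three_term[OF assms])
  have isCont_F: "isCont F t" for t
    unfolding F_def by (rule isCont_bessel_series[OF assms])
  define z where "z = (\<bar>M\<bar> + 2) / (Q * Q)"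
  have zQ: "Q * (Q * z) = \<bar>M\<bar> + 2" and "0 < z" using Q by (simp_all add: z_def)
  have order: "Q * (Q * z) \<le> Q * z" "Q * z \<le> z"
    using Q \<open>0 < z\<close> by (simp_all add: mult_left_le_one_le)
  \<comment> \<open>the coefficient Q + c - Q^2 z in the three-term relation is negative,
      so F cannot have the same sign at Q^2 z, Q z and z\<close>
  have "F (Q * (Q * z)) * F (Q * z) \<le> 0 \<or> F (Q * z) * F z \<le> 0"
  proof (rule ccontr)
    assume "\<not> ?thesis"
    then have "0 < F (Q * (Q * z)) * F (Q * z)" "0 < F (Q * z) * F z" by auto
    then have "0 < Q * (F (Q * z) * F z) + c * (F (Q * (Q * z)) * F (Q * z))"
      using Q assms by (simp add: add_pos_nonneg)
    also have "\<dots> = (Q * F z + c * F (Q * (Q * z))) * F (Q * z)"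
      by (simp add: algebra_simps)
    also have "\<dots> = (Q + c - Q * Q * z) * (F (Q * z))^2"
      by (simp add: three power2_eq_square mult.assoc)
    also have "\<dots> \<le> 0"
      using zQ Q assms by (intro mult_nonpos_nonneg) auto
    finally show False by simp
  qed
  then obtain t where t: "Q * (Q * z) \<le> t" "F t = 0"
  proof
    assume "F (Q * (Q * z)) * F (Q * z) \<le> 0"
    then show thesis using IVT_sign_change[OF order(1) _ isCont_F] that by blast
  next
    assume "F (Q * z) * F z \<le> 0"
    then obtain t where "Q * z \<le> t" "F t = 0" using IVT_sign_change[OF order(2) _ isCont_F] by blast
    then show thesis using that[of t] order(1) by linarith
  qed
  moreover have "M < Q * (Q * z)" using zQ by simp
  ultimately show ?thesis unfolding F_def using less_le_trans by blast
qed

subsection \<open>The Wronskian\<close>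

lemma bessel_series_deriv_contiguous:
  assumes "0 \<le> c" "c < 1"
  shows "bessel_series_deriv c z =
    bessel_series_deriv (c * q^2) z - c * q^2 * bessel_series_deriv (c * q^2) (q^2 * z)"
proof -
  note cq = mult_q2_bounds[OF assms]
  have "bessel_series c = (\<lambda>z. bessel_series (c * q^2) z - c * bessel_series (c * q^2) (q^2 * z))"
    using bessel_series_contiguous[OF assms] by auto
  then have "(bessel_series c has_real_derivative
      bessel_series_deriv (c * q^2) z - c * (q^2 * bessel_series_deriv (c * q^2) (q^2 * z))) (at z)"
    using DERIV_diff[OF bessel_series_has_deriv[OF cq] DERIV_cmult[OF bessel_series_dilated_has_deriv[OF cq]]]
    by simp
  then show ?thesis
    using DERIV_unique[OF bessel_series_has_deriv[OF assms]] by (simp add: mult.assoc)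
qed

lemma bessel_series_deriv_q_difference:
  assumes "0 \<le> c" "c < 1"
  shows "bessel_series_deriv c z - q^2 * bessel_series_deriv c (q^2 * z) =
    - (q^2 * bessel_series (c * q^2) (q^2 * z)) - q^2 * (q^2 * z) * bessel_series_deriv (c * q^2) (q^2 * z)"
proof -
  note cq = mult_q2_bounds[OF assms]
  have "(\<lambda>z. bessel_series c z - bessel_series c (q^2 * z)) =
      (\<lambda>z. - (q^2 * z) * bessel_series (c * q^2) (q^2 * z))"
    using bessel_series_q_difference[OF assms] by auto
  then have rhs: "((\<lambda>z. bessel_series c z - bessel_series c (q^2 * z)) has_real_derivative
      - (q^2 * 1) * bessel_series (c * q^2) (q^2 * z)
      + q^2 * bessel_series_deriv (c * q^2) (q^2 * z) * - (q^2 * z)) (at z)"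
    using DERIV_mult[OF DERIV_minus[OF DERIV_cmult[OF DERIV_ident]] bessel_series_dilated_has_deriv[OF cq]]
    by simp
  have lhs: "((\<lambda>z. bessel_series c z - bessel_series c (q^2 * z)) has_real_derivative
      bessel_series_deriv c z - q^2 * bessel_series_deriv c (q^2 * z)) (at z)"
    by (intro DERIV_diff bessel_series_has_deriv bessel_series_dilated_has_deriv assms)
  show ?thesis using DERIV_unique[OF lhs rhs] by (simp add: algebra_simps)
qed

definition bessel_wronskian :: "real \<Rightarrow> real \<Rightarrow> real" where
  "bessel_wronskian c x =
     (bessel_series (c * q^2) x + x * bessel_series_deriv (c * q^2) x) * bessel_series c x
     - x * bessel_series (c * q^2) x * bessel_series_deriv c x"

lemma bessel_wronskian_functional_eq:
  assumes "0 \<le> c" "c < 1"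
  shows "bessel_wronskian c x = (bessel_series c x)^2 + c * bessel_wronskian c (q^2 * x)"
  using bessel_series_contiguous[OF assms, of x] bessel_series_q_difference[OF assms, of x]
    bessel_series_deriv_contiguous[OF assms, of x] bessel_series_deriv_q_difference[OF assms, of x]
  unfolding bessel_wronskian_def by algebra

lemma bessel_wronskian_pos:
  assumes "0 < c" "c < 1"
  shows "0 < bessel_wronskian c x"
proof -
  note cq = mult_q2_bounds[OF less_imp_le[OF assms(1)] assms(2)]
  have lower: "c ^ n * bessel_wronskian c ((q^2) ^ n * x) \<le> bessel_wronskian c x" for n
  proof (induction n)
    case (Suc n)
    have "c * bessel_wronskian c (q^2 * ((q^2) ^ n * x)) \<le> bessel_wronskian c ((q^2) ^ n * x)"
      using bessel_wronskian_functional_eq[of c "(q^2) ^ n * x"] assms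
        zero_le_power2[of "bessel_series c ((q^2) ^ n * x)"] by linarith
    then have "c ^ Suc n * bessel_wronskian c ((q^2) ^ Suc n * x) \<le> c ^ n * bessel_wronskian c ((q^2) ^ n * x)"
      using assms by (simp add: mult_left_mono mult.assoc)
    then show ?case using Suc.IH by linarith
  qed simp
  have "isCont (bessel_wronskian c) 0"
    unfolding bessel_wronskian_def[abs_def] using assms cq
    by (intro continuous_intros isCont_bessel_series isCont_bessel_series_deriv) auto
  moreover have "(\<lambda>n. (q^2) ^ n * x) \<longlonglongrightarrow> 0"
    using q2_pos q2_less_one by (intro tendsto_mult_left_zero LIMSEQ_power_zero) auto
  ultimately have "(\<lambda>n. bessel_wronskian c ((q^2) ^ n * x)) \<longlonglongrightarrow> bessel_wronskian c 0"
    by (rule isCont_tendsto_compose)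
  moreover have "0 < bessel_wronskian c 0"
    unfolding bessel_wronskian_def using bessel_series_at_0_pos assms cq by simp
  ultimately have "\<forall>\<^sub>F n in sequentially. 0 < bessel_wronskian c ((q^2) ^ n * x)"
    by (rule order_tendstoD(1))
  then obtain n where "0 < bessel_wronskian c ((q^2) ^ n * x)"
    unfolding eventually_sequentially by blast
  then have "0 < c ^ n * bessel_wronskian c ((q^2) ^ n * x)"
    using assms by simp
  then show ?thesis using lower[of n] by linarith
qed

section \<open>Zeros of J_nu and J_(nu+1)\<close>

lemma positive_wronskian_bessel_series:
  assumes "0 < c" "c < 1"
  shows "positive_wronskian (bessel_series c) (\<lambda>z. z * bessel_series (c * q^2) z) (bessel_series_deriv c)
    (\<lambda>z. bessel_series (c * q^2) z + z * bessel_series_deriv (c * q^2) z)"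
proof
  note cq = mult_q2_bounds[OF less_imp_le[OF assms(1)] assms(2)]
  show "(bessel_series c has_real_derivative bessel_series_deriv c x) (at x)" for x
    using assms by (intro bessel_series_has_deriv) auto
  show "((\<lambda>z. z * bessel_series (c * q^2) z) has_real_derivative
      bessel_series (c * q^2) x + x * bessel_series_deriv (c * q^2) x) (at x)" for x
    using DERIV_mult[OF DERIV_ident bessel_series_has_deriv[OF cq]] by (simp add: mult.commute)
  show "0 < (bessel_series (c * q^2) x + x * bessel_series_deriv (c * q^2) x) * bessel_series c x
      - x * bessel_series (c * q^2) x * bessel_series_deriv c x" for x
    using bessel_wronskian_pos[OF assms] unfolding bessel_wronskian_def .
qed

lemma bessel_series_zeros_interlace:
  assumes "0 < c" "c < 1"
  shows "\<exists>a b :: nat \<Rightarrow> real.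
    strict_mono a \<and> range a = {z. 0 < z \<and> bessel_series c z = 0} \<and>
    strict_mono b \<and> range b = {z. 0 < z \<and> bessel_series (c * q^2) z = 0} \<and>
    0 < a 0 \<and> (\<forall>n. a n < b n \<and> b n < a (Suc n))"
proof -
  interpret positive_wronskian "bessel_series c" "\<lambda>z. z * bessel_series (c * q^2) z"
    "bessel_series_deriv c" "\<lambda>z. bessel_series (c * q^2) z + z * bessel_series_deriv (c * q^2) z"
    by (rule positive_wronskian_bessel_series[OF assms])
  have K_zeros: "{z. 0 < z \<and> z * bessel_series (c * q^2) z = 0} = {z. 0 < z \<and> bessel_series (c * q^2) z = 0}"
    by auto
  have "bessel_series c 0 \<noteq> 0"
    using bessel_series_at_0_pos[OF assms(2)] by simp
  moreover have "\<exists>z>M. bessel_series c z = 0" for M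
    using bessel_series_unbounded_zeros assms by simp
  ultimately show ?thesis
    using interlacing_positive_zeros unfolding K_zeros by simp
qed

lemma q_powr_less_one: "0 < e \<Longrightarrow> q powr e < 1"
  using powr_less_mono2[of e q 1] q_pos q_less_one by simp

lemma hahn_exton_J_eq_bessel_series:
  assumes "\<nu> > -1"
  shows "hahn_exton_J q (of_real \<nu>) (of_real x) =
    exp (of_real \<nu> * Ln (of_real x)) / of_real (qpoch_inf_real (q^2) (q^2)) *
    of_real (bessel_series (q powr (2 * \<nu> + 2)) (x^2))"
proof -
  define c where "c = q powr (2 * \<nu> + 2)"
  have c: "0 < c" "c < 1"
    unfolding c_def using q_pos q_powr_less_one assms by auto
  have Q: "0 \<le> q^2" "q^2 < 1" using q2_pos q2_less_one by auto
  have powr_eq: "(of_real q :: complex) powr (2 * of_real \<nu> + 2 * of_nat k + 2) = of_real (c * (q^2) ^ k)" for k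
  proof -
    have "q powr (2 * \<nu> + 2 + real (2 * k)) = c * q powr real (2 * k)"
      unfolding c_def by (rule powr_add)
    also have "\<dots> = c * (q^2) ^ k"
      using q_pos by (simp only: powr_realpow power_mult)
    finally have "q powr (2 * \<nu> + 2 + real (2 * k)) = c * (q^2) ^ k" .
    moreover have "(2 * of_real \<nu> + 2 * of_nat k + 2 :: complex) = of_real (2 * \<nu> + 2 + real (2 * k))"
      by simp
    ultimately show ?thesis using q_pos by (simp only: powr_of_real)
  qed
  have "(-1) ^ k * of_real (q ^ (k * (k + 1))) *
      qpoch_inf (of_real q powr (2 * of_real \<nu> + 2 * of_nat k + 2)) (q^2)
      / qpoch (of_real (q^2)) (q^2) k * (of_real x :: complex) ^ (2 * k) =
      of_real (bessel_coeff c k * (x^2) ^ k)" for k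
  proof -
    have arg: "c * (q^2) ^ k < 1"
      using mult_power_less_one[OF Q(1) less_imp_le[OF Q(2)] c(2)] .
    show ?thesis
      unfolding powr_eq qpoch_inf_of_real[OF Q arg] qpoch_of_real bessel_coeff_def
      by (simp add: power_mult)
  qed
  moreover have "(\<lambda>k. of_real (bessel_coeff c k * (x^2) ^ k) :: complex) sums of_real (bessel_series c (x^2))"
    unfolding bessel_series_def using c by (intro sums_of_real summable_sums summable_bessel_coeff) auto
  ultimately show ?thesis
    unfolding hahn_exton_J_def c_def[symmetric] using qpoch_inf_of_real[OF Q q2_less_one]
    by (simp add: sums_unique[symmetric])
qed

lemma pos_zeros_eq:
  assumes "\<nu> > -1"
  shows "pos_zeros q \<nu> = {x. 0 < x \<and> bessel_series (q powr (2 * \<nu> + 2)) (x^2) = 0}"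
  using qpoch_inf_real_pos[of "q^2" "q^2"] q2_pos q2_less_one
  unfolding pos_zeros_def hahn_exton_J_eq_bessel_series[OF assms] by auto

end

lemma strict_mono_sqrt_enumeration:
  fixes a :: "nat \<Rightarrow> real"
  assumes "strict_mono a" "range a = {z. 0 < z \<and> P z}"
  shows "strict_mono (\<lambda>n. sqrt (a n)) \<and> range (\<lambda>n. sqrt (a n)) = {x. 0 < x \<and> P (x^2)}"
proof
  show "strict_mono (\<lambda>n. sqrt (a n))"
    using assms(1) by (simp add: strict_mono_def)
  have "range (\<lambda>n. sqrt (a n)) = sqrt ` {z. 0 < z \<and> P z}"
    using assms(2) by (simp add: image_image[symmetric])
  also have "\<dots> = {x. 0 < x \<and> P (x^2)}"
  proof (intro equalityI subsetI)
    fix x assume "x \<in> {x. 0 < x \<and> P (x^2)}"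
    then have "x = sqrt (x^2)" "x^2 \<in> {z. 0 < z \<and> P z}" by auto
    then show "x \<in> sqrt ` {z. 0 < z \<and> P z}" by (rule image_eqI)
  qed auto
  finally show "range (\<lambda>n. sqrt (a n)) = {x. 0 < x \<and> P (x^2)}" .
qed

theorem theorem3p7:
  fixes q \<nu> :: real
  assumes "0 < q" and "q < 1" and "\<nu> > -1"
  shows "\<exists>j j' :: nat \<Rightarrow> real.
           strict_mono j \<and> range j = pos_zeros q \<nu> \<and>
           strict_mono j' \<and> range j' = pos_zeros q (\<nu> + 1) \<and>
           0 < j 0 \<and> (\<forall>k. j k < j' k \<and> j' k < j (Suc k))"
proof -
  interpret hahn_exton_q q using assms(1,2) by unfold_locales
  define c where "c = q powr (2 * \<nu> + 2)"
  have c: "0 < c" "c < 1"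
    unfolding c_def using assms q_powr_less_one by auto
  have "q powr (2 * (\<nu> + 1) + 2) = c * q powr 2"
    unfolding c_def by (simp add: powr_add[symmetric] algebra_simps)
  then have "q powr (2 * (\<nu> + 1) + 2) = c * q^2"
    using assms(1) by (simp add: powr_numeral)
  then have zeros: "pos_zeros q \<nu> = {x. 0 < x \<and> bessel_series c (x^2) = 0}"
      "pos_zeros q (\<nu> + 1) = {x. 0 < x \<and> bessel_series (c * q^2) (x^2) = 0}"
    using pos_zeros_eq assms(3) unfolding c_def by auto
  obtain a b :: "nat \<Rightarrow> real" where
    a: "strict_mono a" "range a = {z. 0 < z \<and> bessel_series c z = 0}" and
    b: "strict_mono b" "range b = {z. 0 < z \<and> bessel_series (c * q^2) z = 0}" and
    interlace: "0 < a 0" "\<forall>n. a n < b n \<and> b n < a (Suc n)"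
    using bessel_series_zeros_interlace[OF c] by blast
  show ?thesis
    unfolding zeros
    using strict_mono_sqrt_enumeration[OF a] strict_mono_sqrt_enumeration[OF b] interlace
    by (intro exI[of _ "\<lambda>n. sqrt (a n)"] exI[of _ "\<lambda>n. sqrt (b n)"]) auto
qed

end
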